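(* In the standing setting below, let $(u,v)$ be a bounded, decaying, optimal integrable positive solution and suppose $p\frac{n-\beta\gamma}{\gamma-1}-\sigma_2>n$. Then $v(x)\simeq|x|^{-\frac{n-\beta\gamma}{\gamma-1}}$.
   Context: Standing setting: $n\ge3$, $\beta>0$, $\gamma>1$, $\beta\gamma<n$, $p,q>0$ with $q\ge p$, $pq>(\gamma-1)^2$, $\sigma_1,\sigma_2\in(-\beta\gamma,\infty)$ with $\sigma_1\le\sigma_2$, $q_0+p_0\le\frac{n-\beta\gamma}{\gamma-1}$ where $q_0=\frac{\beta\gamma(\gamma-1+q)+(\gamma-1)\sigma_1+\sigma_2 q}{pq-(\gamma-1)^2}$, $p_0=\frac{\beta\gamma(\gamma-1+p)+(\gamma-1)\sigma_2+\sigma_1 p}{pq-(\gamma-1)^2}$; $c_1,c_2$ are double bounded (i.e. $1/C\le c_i(x)\le C$ for some $C>0$), and $(u,v)$ is a positive solution (nonnegative $L^1_{loc}$ functions, positive, satisfying the equations a.e.) of $u(x)=c_1(x)W_{\beta,\gamma}(|y|^{\sigma_1}v^q)(x)$, $v(x)=c_2(x)W_{\beta,\gamma}(|y|^{\sigma_2}u^p)(x)$, where $W_{\beta,\gamma}(f)(x)=\int_0^\infty\Big(\frac{\int_{B_t(x)}f(y)\,dy}{t^{n-\beta\gamma}}\Big)^{\frac{1}{\gamma-1}}\frac{dt}{t}$. For positive $f$, $f(x)\simeq g(x)$ means $1/c\le f(x)/g(x)\le c$ for some $c>0$ and all sufficiently large $|x|$; decaying means $u\simeq|x|^{-\theta_1}$,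 $v\simeq|x|^{-\theta_2}$ for some $\theta_1,\theta_2>0$. Optimal integrable means $(u,v)\in L^r\times L^s$ for all $r>\frac{n(\gamma-1)}{n-\beta\gamma}$ and $s>\max\big\{\frac{n(\gamma-1)}{n-\beta\gamma},\frac{n(\gamma-1)}{p\frac{n-\beta\gamma}{\gamma-1}-(\beta\gamma+\sigma_2)}\big\}$. *)

theory Defs
  imports "HOL-Analysis.Analysis"
begin

text \<open>The outer integral is a nonnegative (ennreal-valued) Lebesgue integral, so it may be infinite.\<close>
definition wolff :: "real \<Rightarrow> real \<Rightarrow> (real^'n \<Rightarrow> real) \<Rightarrow> real^'n \<Rightarrow> ennreal" where
  "wolff \<beta> \<gamma> f x =
     (\<integral>\<^sup>+ t \<in> {0<..}.
        ennreal (((LINT y : ball x t | lborel. f y) / t powr (real CARD('n) - \<beta> * \<gamma>))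
                   powr (1 / (\<gamma> - 1)) / t) \<partial>lborel)"

definition loc_integrable :: "(real^'n \<Rightarrow> real) \<Rightarrow> bool" where
  "loc_integrable f \<longleftrightarrow> (\<forall>K. compact K \<longrightarrow> set_integrable lborel K f)"

definition double_bounded :: "('a \<Rightarrow> real) \<Rightarrow> bool" where
  "double_bounded c \<longleftrightarrow> (\<exists>C>0. \<forall>x. 1 / C \<le> c x \<and> c x \<le> C)"

definition asym_equiv :: "(real^'n \<Rightarrow> real) \<Rightarrow> (real^'n \<Rightarrow> real) \<Rightarrow> bool" where
  "asym_equiv f g \<longleftrightarrow> (\<exists>c>0. \<exists>R. \<forall>x. norm x \<ge> R \<longrightarrow> 1 / c \<le> f x / g x \<and> f x / g x \<le> c)"

definition positive_solution ::
  "real \<Rightarrow> real \<Rightarrow> real \<Rightarrow> real \<Rightarrow> real \<Rightarrow> real \<Rightarrow> (real^'n \<Rightarrow> real) \<Rightarrow> (real^'n \<Rightarrow> real)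
   \<Rightarrow> (real^'n \<Rightarrow> real) \<Rightarrow> (real^'n \<Rightarrow> real) \<Rightarrow> bool" where
  "positive_solution \<beta> \<gamma> p q \<sigma>1 \<sigma>2 c1 c2 u v \<longleftrightarrow>
     (\<forall>x. u x > 0) \<and> (\<forall>x. v x > 0) \<and> loc_integrable u \<and> loc_integrable v \<and>
     (AE x in lborel. ennreal (u x) = ennreal (c1 x) * wolff \<beta> \<gamma> (\<lambda>y. norm y powr \<sigma>1 * v y powr q) x) \<and>
     (AE x in lborel. ennreal (v x) = ennreal (c2 x) * wolff \<beta> \<gamma> (\<lambda>y. norm y powr \<sigma>2 * u y powr p) x)"

end

theory Submission
  imports Defs "HOL-Real_Asymp.Real_Asymp"
begin

text \<open>Write \<open>v \<simeq> |x| powr (-\<theta>)\<close> and \<open>\<theta>\<^sub>0 = (n - \<beta>\<gamma>)/(\<gamma> - 1)\<close>.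
  Since \<open>p\<theta>\<^sub>0 - \<sigma>2 > n\<close>, the optimal integrability of \<open>v\<close> makes \<open>v powr s\<close> integrable
  for every \<open>s > n/\<theta>\<^sub>0\<close>; as \<open>|x| powr (-a)\<close> is not integrable at infinity for \<open>a < n\<close>,
  this forces \<open>\<theta> \<ge> \<theta>\<^sub>0\<close>.
  Conversely, for \<open>|x| + 1 \<le> t \<le> 2(|x| + 1)\<close> the ball \<open>B\<^sub>t(x)\<close> contains the unit ball, so
  the Wolff potential of a nonnegative function with positive mass on the unit ball is at
  least a constant times \<open>(|x| + 1) powr (-\<theta>\<^sub>0)\<close>. Through the equation for \<open>v\<close> this gives
  the same lower bound for \<open>v\<close>, whence \<open>\<theta> \<le> \<theta>\<^sub>0\<close>.\<close>

lemma AE_lborel_ex_in_ball: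
  fixes z :: "'a::euclidean_space"
  assumes "AE x in lborel. P x" and "r > 0"
  shows "\<exists>x\<in>ball z r. P x"
proof (rule ccontr)
  assume none: "\<not> (\<exists>x\<in>ball z r. P x)"
  from assms(1) obtain N
    where N: "{x \<in> space lborel. \<not> P x} \<subseteq> N" "emeasure lborel N = 0" "N \<in> sets lborel"
    by (rule AE_E)
  have "emeasure lborel (ball z r) \<le> emeasure lborel N"
    using N none by (intro emeasure_mono) auto
  with N(2) assms(2) show False
    using unit_ball_vol_pos[of "real DIM('a)"] by (simp add: emeasure_ball)
qed

lemma AE_lborel_ex_norm_ge:
  assumes "AE x::'a::euclidean_space in lborel. P x"
  shows "\<exists>x::'a. R \<le> norm x \<and> P x"
proof -
  obtain b :: 'a where b: "b \<in> Basis"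
    using nonempty_Basis by blast
  define z where "z = (\<bar>R\<bar> + 1) *\<^sub>R b"
  obtain x where x: "x \<in> ball z 1" "P x"
    using AE_lborel_ex_in_ball[OF assms, of 1 z] by auto
  have "norm z = \<bar>R\<bar> + 1"
    using b by (simp add: z_def)
  with x(1) have "R \<le> norm x"
    using norm_triangle_ineq2[of z x] by (auto simp: dist_norm norm_minus_commute)
  with x(2) show ?thesis
    by blast
qed

lemma ex_dyadic_shell:
  fixes s \<rho> :: real
  assumes "0 < s" "s \<le> \<rho>"
  shows "\<exists>k. \<rho> / 2 ^ Suc k < s \<and> s \<le> \<rho> / 2 ^ k"
proof -
  have "\<exists>k. \<rho> / 2 ^ Suc k < s"
  proof -
    obtain k where "\<rho> / s < 2 ^ k"
      using real_arch_pow[of 2 "\<rho> / s"] by auto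
    then have "\<rho> / 2 ^ k < s"
      using assms by (simp add: field_simps)
    moreover have "\<rho> / 2 ^ Suc k \<le> \<rho> / 2 ^ k"
      using assms by (intro divide_left_mono) auto
    ultimately show ?thesis
      by (intro exI[of _ k]) linarith
  qed
  define k where "k = (LEAST k. \<rho> / 2 ^ Suc k < s)"
  have "\<rho> / 2 ^ Suc k < s"
    unfolding k_def by (rule LeastI_ex) fact
  moreover have "s \<le> \<rho> / 2 ^ k"
  proof (cases k)
    case (Suc j)
    then show ?thesis
      using not_less_Least[of j "\<lambda>k. \<rho> / 2 ^ Suc k < s"] by (simp add: k_def)
  qed (use assms in simp)
  ultimately show ?thesis
    by blast
qed

lemma set_integrable_norm_powr_cball:
  fixes b \<rho> :: real
  assumes b: "b \<le> 0" "b > - real DIM('a)" and \<rho>: "\<rho> > 0"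
  shows "set_integrable lborel (cball (0::'a::euclidean_space) \<rho>) (\<lambda>y. norm y powr b)"
proof -
  \<comment> \<open>On the dyadic shell \<open>r (Suc k) < |y| \<le> r k\<close> the integrand is at most \<open>r (Suc k) powr b\<close>;
    summing these bounds over the balls \<open>cball 0 (r k)\<close> gives a geometric series of ratio
    \<open>2 powr (- (b + D)) < 1\<close>.\<close>
  define D where "D = real DIM('a)"
  define r where "r k = \<rho> / 2 ^ k" for k :: nat
  define g where "g k y = ennreal (r (Suc k) powr b) * indicator (cball (0::'a) (r k)) y" for k y
  have r_powr: "r k powr e = \<rho> powr e * 2 powr (- (real k * e))" for k e
    using \<rho> by (simp add: r_def powr_divide powr_minus_divide powr_powr powr_realpow[symmetric])
  have dominated: "ennreal (indicator (cball 0 \<rho>) y * norm y powr b) \<le> (\<Sum>k. g k y)" for y :: 'a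
  proof (cases "y \<in> cball 0 \<rho> \<and> y \<noteq> 0")
    case True
    then obtain k where k: "r (Suc k) < norm y" "norm y \<le> r k"
      using ex_dyadic_shell[of "norm y" \<rho>] by (auto simp: r_def)
    have "norm y powr b \<le> r (Suc k) powr b"
      using k(1) b \<rho> by (intro powr_mono2') (auto simp: r_def)
    then have "ennreal (indicator (cball 0 \<rho>) y * norm y powr b) \<le> g k y"
      using True k(2) by (simp add: g_def indicator_def)
    also have "\<dots> \<le> (\<Sum>k. g k y)"
      using sum_le_suminf[of "\<lambda>k. g k y" "{k}"] by (auto simp: summableI)
    finally show ?thesis .
  qed (auto simp: indicator_def)
  define q where "q = 2 powr (- (b + D))"
  define C where "C = unit_ball_vol D * \<rho> powr (b + D) * 2 powr (-b)"
  have q: "0 \<le> q" "q < 1"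
    using b powr_less_one[of 2 "- (b + D)"] by (auto simp: q_def D_def)
  have g_integral: "integral\<^sup>N lborel (g k) = ennreal (C * q ^ k)" for k
  proof -
    have "integral\<^sup>N lborel (g k) = ennreal (r (Suc k) powr b) * emeasure lborel (cball (0::'a) (r k))"
      unfolding g_def by (simp add: nn_integral_cmult_indicator)
    also have "\<dots> = ennreal (r (Suc k) powr b * (unit_ball_vol D * r k powr D))"
      using \<rho> by (simp add: emeasure_cball D_def r_def ennreal_mult powr_realpow)
    also have "r (Suc k) powr b * (unit_ball_vol D * r k powr D) = C * q ^ k"
      by (simp add: r_powr C_def q_def powr_realpow[symmetric] powr_powr powr_add[symmetric]
          algebra_simps)
    finally show ?thesis .
  qed
  have "g k \<in> borel_measurable lborel" for k
    unfolding g_def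
    by (intro borel_measurable_times_ennreal borel_measurable_const borel_measurable_indicator) auto
  then have "(\<integral>\<^sup>+ y. (\<Sum>k. g k y) \<partial>lborel) = (\<Sum>k. integral\<^sup>N lborel (g k))"
    by (rule nn_integral_suminf)
  also have "\<dots> = ennreal (C / (1 - q))"
    unfolding g_integral
    using sums_mult[OF geometric_sums[of q], of C] q
    by (intro suminf_ennreal_eq) (auto simp: C_def D_def divide_simps)
  finally have sum_finite: "(\<integral>\<^sup>+ y. (\<Sum>k. g k y) \<partial>lborel) < \<infinity>"
    by simp
  have "(\<integral>\<^sup>+ y. ennreal (norm (indicator (cball (0::'a) \<rho>) y *\<^sub>R norm y powr b)) \<partial>lborel)
      \<le> (\<integral>\<^sup>+ y. (\<Sum>k. g k y) \<partial>lborel)"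
    using dominated by (intro nn_integral_mono) (simp add: indicator_def)
  also note sum_finite
  finally show ?thesis
    unfolding set_integrable_def
    by (rule integrableI_bounded[rotated])
      (intro borel_measurable_scaleR borel_measurable_indicator powr_real_measurable
         borel_measurable_norm measurable_ident_sets borel_measurable_const; simp)
qed

lemma set_integrable_norm_powr_mult_bounded:
  fixes g :: "'a::euclidean_space \<Rightarrow> real"
  assumes g: "g \<in> borel_measurable lborel" "\<And>y. \<bar>g y\<bar> \<le> B" and \<sigma>: "\<sigma> > - real DIM('a)"
  shows "set_integrable lborel (ball x t) (\<lambda>y. norm y powr \<sigma> * g y)"
proof -
  define \<rho> where "\<rho> = norm x + \<bar>t\<bar> + 1"
  define K where "K = B * max 1 (\<rho> powr \<sigma>)"
  have \<rho>: "\<rho> > 0"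
    by (simp add: \<rho>_def add_nonneg_pos)
  have "set_integrable lborel (cball (0::'a) \<rho>) (\<lambda>y. norm y powr min \<sigma> 0)"
    by (rule set_integrable_norm_powr_cball) (use \<sigma> \<rho> in auto)
  then have dominating: "set_integrable lborel (cball (0::'a) \<rho>) (\<lambda>y. K * norm y powr min \<sigma> 0)"
    by (rule set_integrable_mult_right)
  have bound: "norm (norm y powr \<sigma> * g y) \<le> norm (K * norm y powr min \<sigma> 0)"
    if "y \<in> cball 0 \<rho>" for y :: 'a
  proof -
    have "norm y powr \<sigma> \<le> max 1 (\<rho> powr \<sigma>) * norm y powr min \<sigma> 0"
    proof (cases "\<sigma> < 0")
      case False
      then have "norm y powr \<sigma> \<le> \<rho> powr \<sigma>"
        using that by (intro powr_mono2) auto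
      then show ?thesis
        using False by (auto simp: min_def le_max_iff_disj)
    qed (use mult_right_mono[of 1 "max 1 (\<rho> powr \<sigma>)" "norm y powr \<sigma>"] in \<open>simp add: min_def\<close>)
    then have "norm y powr \<sigma> * \<bar>g y\<bar> \<le> (max 1 (\<rho> powr \<sigma>) * norm y powr min \<sigma> 0) * B"
      using g(2)[of y] by (intro mult_mono) auto
    moreover have "B \<ge> 0"
      using g(2)[of y] by linarith
    ultimately show ?thesis
      by (simp add: K_def abs_mult algebra_simps)
  qed
  have measurable: "set_borel_measurable lborel (cball 0 \<rho>) (\<lambda>y. norm y powr \<sigma> * g y)"
    unfolding set_borel_measurable_def
    by (intro borel_measurable_scaleR borel_measurable_indicator borel_measurable_times
        powr_real_measurable borel_measurable_norm measurable_ident_sets borel_measurable_const g(1); simp)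
  have on_cball: "set_integrable lborel (cball (0::'a) \<rho>) (\<lambda>y. norm y powr \<sigma> * g y)"
    by (rule set_integrable_bound[OF dominating measurable]) (use bound in simp)
  have "ball x t \<subseteq> cball 0 \<rho>"
  proof
    fix y assume "y \<in> ball x t"
    then have "norm (y - x) < t"
      by (simp add: dist_norm norm_minus_commute)
    then show "y \<in> cball 0 \<rho>"
      using norm_triangle_ineq2[of y x] by (simp add: \<rho>_def)
  qed
  then show ?thesis
    by (rule set_integrable_subset[OF on_cball, rotated]) simp
qed

lemma loc_integrable_imp_borel_measurable:
  assumes "loc_integrable u"
  shows "u \<in> borel_measurable lborel"
proof (rule borel_measurable_LIMSEQ_real)
  show "(\<lambda>i. indicator (cball 0 (real i)) x *\<^sub>R u x) \<longlonglongrightarrow> u x" for x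
  proof (rule tendsto_eventually)
    obtain N :: nat where "norm x \<le> real N"
      using real_arch_simple by blast
    then show "\<forall>\<^sub>F i in sequentially. indicator (cball 0 (real i)) x *\<^sub>R u x = u x"
      by (intro eventually_sequentiallyI[of N]) (auto simp: indicator_def)
  qed
  show "(\<lambda>x. indicator (cball 0 (real i)) x *\<^sub>R u x) \<in> borel_measurable lborel" for i
    using assms compact_cball[of 0 "real i"] unfolding loc_integrable_def set_integrable_def
    by (blast intro: borel_measurable_integrable)
qed

lemma set_integral_ball_pos:
  fixes f :: "'a::euclidean_space \<Rightarrow> real"
  assumes f: "set_integrable lborel (ball z r) f" "\<And>y. f y \<ge> 0" "AE y in lborel. f y > 0"
    and r: "r > 0"
  shows "(LINT y : ball z r | lborel. f y) > 0"
proof -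
  have "(LINT y : ball z r | lborel. f y) \<noteq> 0"
  proof
    assume "(LINT y : ball z r | lborel. f y) = 0"
    then have "AE y in lborel. indicator (ball z r) y *\<^sub>R f y = 0"
      using f(1,2) unfolding set_lebesgue_integral_def set_integrable_def
      by (subst integral_nonneg_eq_0_iff_AE[symmetric]) auto
    with f(3) have "AE y in lborel. y \<notin> ball z r"
      by eventually_elim (auto simp: indicator_def)
    with AE_lborel_ex_in_ball[OF _ r] show False
      by blast
  qed
  moreover have "(LINT y : ball z r | lborel. f y) \<ge> 0"
    using f(2) unfolding set_lebesgue_integral_def by (intro integral_nonneg_AE) simp
  ultimately show ?thesis
    by simp
qed

lemma wolff_ge_norm_powr:
  fixes f :: "real^'n \<Rightarrow> real"
  assumes f: "\<And>y. f y \<ge> 0" "\<And>x t. set_integrable lborel (ball x t) f"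
    and mass: "(LINT y : ball 0 1 | lborel. f y) > 0"
    and \<gamma>: "\<gamma> > 1" and \<beta>\<gamma>: "\<beta> * \<gamma> < real CARD('n)"
  shows "\<exists>K>0. \<forall>x. ennreal (K * (norm x + 1) powr (- ((real CARD('n) - \<beta> * \<gamma>) / (\<gamma> - 1))))
                    \<le> wolff \<beta> \<gamma> f x"
proof -
  define a where "a = real CARD('n) - \<beta> * \<gamma>"
  define e where "e = 1 / (\<gamma> - 1)"
  define m where "m = (LINT y : ball (0::real^'n) 1 | lborel. f y)"
  define K where "K = m powr e * 2 powr (- (a * e)) / 2"
  have a: "a > 0" and e: "e > 0" and m: "m > 0"
    using \<beta>\<gamma> \<gamma> mass by (simp_all add: a_def e_def m_def)
  have "ennreal (K * (norm x + 1) powr (- (a * e))) \<le> wolff \<beta> \<gamma> f x" for x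
  proof -
    define T where "T = norm x + 1"
    have T: "T \<ge> 1"
      by (simp add: T_def)
    define c where "c = (m / (2 * T) powr a) powr e / (2 * T)"
    have integrand: "ennreal c * indicator {T..2 * T} t \<le>
        ennreal (((LINT y : ball x t | lborel. f y) / t powr a) powr e / t) * indicator {0<..} t" for t
    proof (cases "t \<in> {T..2 * T}")
      case True
      then have t: "0 < t" "T \<le> t" "t \<le> 2 * T"
        using T by auto
      have "ball 0 1 \<subseteq> ball x t"
      proof
        fix y :: "real^'n" assume "y \<in> ball 0 1"
        then show "y \<in> ball x t"
          using norm_triangle_ineq4[of x y] t(2) by (simp add: T_def dist_norm)
      qed
      then have "m \<le> (LINT y : ball x t | lborel. f y)"
        using f(1) f(2)[of 0 1] f(2)[of x t] unfolding m_def set_lebesgue_integral_def set_integrable_def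
        by (intro integral_mono) (auto simp: indicator_def)
      moreover have "t powr a \<le> (2 * T) powr a"
        using t a by (intro powr_mono2) auto
      ultimately have "m / (2 * T) powr a \<le> (LINT y : ball x t | lborel. f y) / t powr a"
        using m t by (intro frac_le) auto
      then have "(m / (2 * T) powr a) powr e \<le> ((LINT y : ball x t | lborel. f y) / t powr a) powr e"
        using m T e by (intro powr_mono2) auto
      then have "c \<le> ((LINT y : ball x t | lborel. f y) / t powr a) powr e / t"
        unfolding c_def using t by (intro frac_le) auto
      then show ?thesis
        using True t by simp
    qed simp
    have "ennreal (c * T) = (\<integral>\<^sup>+ t. ennreal c * indicator {T..2 * T} t \<partial>lborel)"
      using T by (simp add: nn_integral_cmult_indicator ennreal_mult[symmetric] c_def)
    also have "\<dots> \<le> wolff \<beta> \<gamma> f x"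
      unfolding wolff_def a_def[symmetric] e_def[symmetric]
      by (rule nn_integral_mono) (rule integrand)
    also have "c * T = K * T powr (- (a * e))"
      using m T by (simp add: c_def K_def powr_divide powr_powr powr_mult powr_minus field_simps)
    finally show ?thesis
      by (simp add: T_def)
  qed
  moreover have "K > 0"
    using m by (simp add: K_def)
  moreover have "a * e = (real CARD('n) - \<beta> * \<gamma>) / (\<gamma> - 1)"
    by (simp add: a_def e_def)
  ultimately show ?thesis
    by metis
qed

lemma emeasure_ball_diff_ball:
  assumes "0 \<le> r" "r \<le> T"
  shows "emeasure lborel (ball (0::'a::euclidean_space) T - ball 0 r)
           = ennreal (unit_ball_vol DIM('a) * (T ^ DIM('a) - r ^ DIM('a)))"
proof -
  have "emeasure lborel (ball (0::'a) T - ball 0 r)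
          = emeasure lborel (ball (0::'a) T) - emeasure lborel (ball (0::'a) r)"
    using assms emeasure_lborel_ball_finite[of "0::'a" r] by (intro emeasure_Diff) auto
  also have "\<dots> = ennreal (unit_ball_vol DIM('a) * (T ^ DIM('a) - r ^ DIM('a)))"
    using assms by (simp add: emeasure_ball ennreal_minus right_diff_distrib)
  finally show ?thesis .
qed

lemma not_integrable_ge_norm_powr:
  fixes f :: "'a::euclidean_space \<Rightarrow> real"
  assumes lower: "\<And>x. R \<le> norm x \<Longrightarrow> k * norm x powr (- a) \<le> f x"
    and k: "k > 0" and a: "0 \<le> a" "a < real DIM('a)"
  shows "\<not> integrable lborel f"
proof
  assume "integrable lborel f"
  define D where "D = real DIM('a)"
  define Q where "Q = k * unit_ball_vol D * (1 - (1/2) ^ DIM('a))"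
  define I where "I = enn2real (\<integral>\<^sup>+ x. ennreal (norm (f x)) \<partial>lborel)"
  have I: "(\<integral>\<^sup>+ x. ennreal (norm (f x)) \<partial>lborel) = ennreal I"
    using \<open>integrable lborel f\<close> unfolding integrable_iff_bounded I_def by simp
  have Q: "Q > 0"
    using k by (simp add: Q_def D_def power_less_one_iff)
  have annulus_bound: "ennreal (Q * T powr (D - a)) \<le> ennreal I" if T: "2 * max R 1 \<le> T" for T
  proof -
    define A where "A = ball (0::'a) T - ball 0 (T / 2)"
    have "Q * T powr (D - a) = k * T powr (- a) * (unit_ball_vol D * (T ^ DIM('a) - (T / 2) ^ DIM('a)))"
      using T by (simp add: Q_def D_def powr_diff powr_minus powr_realpow power_divide field_simps)
    then have "ennreal (Q * T powr (D - a)) = ennreal (k * T powr (- a)) * emeasure lborel A"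
      using T k by (simp add: A_def D_def emeasure_ball_diff_ball ennreal_mult[symmetric])
    also have "\<dots> = (\<integral>\<^sup>+ x. ennreal (k * T powr (- a)) * indicator A x \<partial>lborel)"
      by (simp add: nn_integral_cmult_indicator A_def)
    also have "\<dots> \<le> (\<integral>\<^sup>+ x. ennreal (norm (f x)) \<partial>lborel)"
    proof (rule nn_integral_mono)
      fix x :: 'a
      show "ennreal (k * T powr (- a)) * indicator A x \<le> ennreal (norm (f x))"
      proof (cases "x \<in> A")
        case True
        then have x: "T / 2 \<le> norm x" "norm x < T"
          by (auto simp: A_def)
        have "k * T powr (- a) \<le> k * norm x powr (- a)"
          using x T k a by (intro mult_left_mono powr_mono2') auto
        also have "\<dots> \<le> f x"
          using x T by (intro lower) auto
        finally show ?thesis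
          using True by simp
      qed simp
    qed
    finally show ?thesis
      unfolding I .
  qed
  have "eventually (\<lambda>T. I < Q * T powr (D - a)) at_top"
    using Q a by (simp add: D_def) real_asymp
  moreover have "eventually (\<lambda>T. 2 * max R 1 \<le> T) at_top"
    by (rule eventually_ge_at_top)
  ultimately have "eventually (\<lambda>T. I < Q * T powr (D - a) \<and> 2 * max R 1 \<le> T) at_top"
    by (rule eventually_conj)
  then obtain T where "I < Q * T powr (D - a)" "2 * max R 1 \<le> T"
    by (auto simp: eventually_at_top_linorder)
  moreover have "0 \<le> I"
    by (simp add: I_def)
  ultimately show False
    using annulus_bound[of T] by (simp add: ennreal_le_iff)
qed

lemma asym_equiv_norm_powrE:
  assumes "asym_equiv v (\<lambda>x. norm x powr (- \<theta>))"
  obtains c R where "c > 0"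
    and "\<And>x. R \<le> norm x \<Longrightarrow> c * norm x powr (- \<theta>) \<le> v x \<and> v x \<le> norm x powr (- \<theta>) / c"
proof -
  obtain C R where C: "C > 0"
    and ratio: "\<And>x. R \<le> norm x \<Longrightarrow> 1 / C \<le> v x / norm x powr (- \<theta>) \<and> v x / norm x powr (- \<theta>) \<le> C"
    using assms unfolding asym_equiv_def by blast
  have "1 / C * norm x powr (- \<theta>) \<le> v x \<and> v x \<le> norm x powr (- \<theta>) / (1 / C)"
    if "max R 1 \<le> norm x" for x
  proof -
    have "norm x powr (- \<theta>) > 0"
      using that by (auto simp: powr_gt_zero)
    then show ?thesis
      using ratio[of x] that by (simp add: pos_le_divide_eq pos_divide_le_eq mult.commute)
  qed
  with C show thesis
    by (intro that[of "1 / C" "max R 1"]) auto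
qed

lemma asym_equiv_norm_powr_integrable_card_le:
  fixes v :: "real^'n \<Rightarrow> real"
  assumes v: "asym_equiv v (\<lambda>x. norm x powr (- \<theta>))"
    and \<theta>: "\<theta> > 0" and s: "s > 0" and int: "integrable lborel (\<lambda>x. v x powr s)"
  shows "real CARD('n) \<le> \<theta> * s"
proof (rule ccontr)
  assume "\<not> real CARD('n) \<le> \<theta> * s"
  obtain c R where c: "c > 0" and lower: "\<And>x. R \<le> norm x \<Longrightarrow> c * norm x powr (- \<theta>) \<le> v x"
    using asym_equiv_norm_powrE[OF v] by metis
  have "c powr s * norm x powr (- (\<theta> * s)) \<le> v x powr s" if "max R 1 \<le> norm x" for x
  proof -
    have "(c * norm x powr (- \<theta>)) powr s \<le> v x powr s"
      using lower[of x] that c s by (intro powr_mono2) auto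
    then show ?thesis
      using c that by (simp add: powr_mult powr_powr)
  qed
  then have "\<not> integrable lborel (\<lambda>x. v x powr s)"
    using \<open>\<not> _\<close> \<theta> s c
    by (intro not_integrable_ge_norm_powr[where R = "max R 1" and k = "c powr s" and a = "\<theta> * s"]) auto
  with int show False
    by contradiction
qed

lemma asym_equiv_norm_powr_exponent_ge:
  fixes v :: "real^'n \<Rightarrow> real"
  assumes v: "asym_equiv v (\<lambda>x. norm x powr (- \<theta>))" and \<theta>: "\<theta> > 0"
    and A: "A \<ge> 0" and int: "\<And>s. s > A \<Longrightarrow> integrable lborel (\<lambda>x. v x powr s)"
  shows "real CARD('n) \<le> \<theta> * A"
proof (rule dense_ge)
  fix y assume "\<theta> * A < y"
  then have "y / \<theta> > A"
    using \<theta> by (simp add: field_simps)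
  then have "real CARD('n) \<le> \<theta> * (y / \<theta>)"
    using A \<theta> by (intro asym_equiv_norm_powr_integrable_card_le[OF v \<theta>] int) auto
  then show "real CARD('n) \<le> y"
    using \<theta> by simp
qed

lemma asym_equiv_norm_powr_exponent_le:
  fixes v :: "real^'n \<Rightarrow> real"
  assumes v: "asym_equiv v (\<lambda>x. norm x powr (- \<theta>))"
    and lower: "AE x in lborel. K * (norm x + 1) powr (- \<theta>') \<le> v x" and K: "K > 0"
  shows "\<theta> \<le> \<theta>'"
proof (rule ccontr)
  assume "\<not> \<theta> \<le> \<theta>'"
  obtain c R where c: "c > 0" and upper: "\<And>x. R \<le> norm x \<Longrightarrow> v x \<le> norm x powr (- \<theta>) / c"
    using asym_equiv_norm_powrE[OF v] by metis
  have "eventually (\<lambda>r. r powr (- \<theta>) / c < K * (r + 1) powr (- \<theta>')) at_top"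
    using \<open>\<not> \<theta> \<le> \<theta>'\<close> c K by real_asymp
  then obtain R' where R': "\<And>r. R' \<le> r \<Longrightarrow> r powr (- \<theta>) / c < K * (r + 1) powr (- \<theta>')"
    by (auto simp: eventually_at_top_linorder)
  obtain x :: "real^'n" where "max R R' \<le> norm x" "K * (norm x + 1) powr (- \<theta>') \<le> v x"
    using AE_lborel_ex_norm_ge[OF lower] by blast
  with upper[of x] R'[of "norm x"] show False
    by simp
qed

lemma positive_solution_second_ge_norm_powr:
  fixes u v c1 c2 :: "real^'n \<Rightarrow> real"
  assumes sol: "positive_solution \<beta> \<gamma> p q \<sigma>1 \<sigma>2 c1 c2 u v"
    and c2: "double_bounded c2" and u_le: "\<And>x. u x \<le> M"
    and p: "p > 0" and \<gamma>: "\<gamma> > 1" and \<beta>\<gamma>: "\<beta> * \<gamma> < real CARD('n)"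
    and \<sigma>2: "\<sigma>2 > - real CARD('n)"
  shows "\<exists>K>0. AE x in lborel.
           K * (norm x + 1) powr (- ((real CARD('n) - \<beta> * \<gamma>) / (\<gamma> - 1))) \<le> v x"
proof -
  define \<theta> where "\<theta> = (real CARD('n) - \<beta> * \<gamma>) / (\<gamma> - 1)"
  define f where "f y = norm y powr \<sigma>2 * u y powr p" for y :: "real^'n"
  have u_pos: "\<And>x. u x > 0" and v_pos: "\<And>x. v x > 0" and u: "u \<in> borel_measurable lborel"
    and v_eq: "AE x in lborel. ennreal (v x) = ennreal (c2 x) * wolff \<beta> \<gamma> f x"
    using sol loc_integrable_imp_borel_measurable unfolding positive_solution_def f_def by auto
  have f_nonneg: "\<And>y. f y \<ge> 0"
    by (simp add: f_def)
  have f_int: "set_integrable lborel (ball x t) f" for x t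
    unfolding f_def using u \<sigma>2
  proof (intro set_integrable_norm_powr_mult_bounded[where B = "M powr p"])
    show "\<bar>u y powr p\<bar> \<le> M powr p" for y
      using u_pos[of y] u_le[of y] p by (simp add: powr_mono2)
  qed auto
  have "AE y in lborel. f y > 0"
    using AE_lborel_singleton[of 0]
  proof eventually_elim
    case (elim y)
    then show ?case
      unfolding f_def using u_pos[of y] by (intro mult_pos_pos) auto
  qed
  then have "(LINT y : ball 0 1 | lborel. f y) > 0"
    by (intro set_integral_ball_pos f_int f_nonneg) auto
  then obtain K where K: "K > 0" "\<And>x. ennreal (K * (norm x + 1) powr (- \<theta>)) \<le> wolff \<beta> \<gamma> f x"
    using wolff_ge_norm_powr[OF f_nonneg f_int _ \<gamma> \<beta>\<gamma>] unfolding \<theta>_def by blast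
  obtain C where C: "C > 0" "\<And>x. 1 / C \<le> c2 x"
    using c2 unfolding double_bounded_def by blast
  from v_eq have "AE x in lborel. K / C * (norm x + 1) powr (- \<theta>) \<le> v x"
  proof eventually_elim
    case (elim x)
    have "ennreal (K / C * (norm x + 1) powr (- \<theta>)) = ennreal (1 / C) * ennreal (K * (norm x + 1) powr (- \<theta>))"
      using C K by (simp add: ennreal_mult[symmetric])
    also have "\<dots> \<le> ennreal (c2 x) * wolff \<beta> \<gamma> f x"
      using C(2)[of x] K(2)[of x] by (intro mult_mono ennreal_leI) auto
    also have "\<dots> = ennreal (v x)"
      using elim by simp
    finally show ?case
      using v_pos[of x] by (simp add: ennreal_le_iff)
  qed
  with K C show ?thesis
    unfolding \<theta>_def by (intro exI[of _ "K / C"]) auto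
qed

theorem proposition6:
  fixes u v c1 c2 :: "real^'n \<Rightarrow> real"
    and \<beta> \<gamma> p q \<sigma>1 \<sigma>2 :: real
  defines "n \<equiv> real CARD('n)"
  defines "q0 \<equiv> (\<beta>*\<gamma>*(\<gamma>-1+q) + (\<gamma>-1)*\<sigma>1 + \<sigma>2*q) / (p*q - (\<gamma>-1)^2)"
  defines "p0 \<equiv> (\<beta>*\<gamma>*(\<gamma>-1+p) + (\<gamma>-1)*\<sigma>2 + \<sigma>1*p) / (p*q - (\<gamma>-1)^2)"
  assumes n3: "CARD('n) \<ge> 3"
    and "\<beta> > 0" and "\<gamma> > 1" and "\<beta> * \<gamma> < n"
    and "p > 0" and "q > 0" and "q \<ge> p" and "p * q > (\<gamma> - 1)^2"
    and "\<sigma>1 > - (\<beta> * \<gamma>)" and "\<sigma>2 > - (\<beta> * \<gamma>)" and "\<sigma>1 \<le> \<sigma>2"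
    and "q0 + p0 \<le> (n - \<beta> * \<gamma>) / (\<gamma> - 1)"
    and "double_bounded c1" and "double_bounded c2"
    and sol: "positive_solution \<beta> \<gamma> p q \<sigma>1 \<sigma>2 c1 c2 u v"
    and bounded: "\<exists>M. \<forall>x. u x \<le> M \<and> v x \<le> M"
    and decaying: "\<exists>\<theta>1>0. \<exists>\<theta>2>0. asym_equiv u (\<lambda>x. norm x powr (-\<theta>1)) \<and>
                                   asym_equiv v (\<lambda>x. norm x powr (-\<theta>2))"
    and opt_int:
      "\<forall>r. r > n * (\<gamma> - 1) / (n - \<beta> * \<gamma>) \<longrightarrow> integrable lborel (\<lambda>x. u x powr r)"
      "\<forall>s. s > max (n * (\<gamma> - 1) / (n - \<beta> * \<gamma>))
                    (n * (\<gamma> - 1) / (p * (n - \<beta> * \<gamma>) / (\<gamma> - 1) - (\<beta> * \<gamma> + \<sigma>2)))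
             \<longrightarrow> integrable lborel (\<lambda>x. v x powr s)"
    and "p * (n - \<beta> * \<gamma>) / (\<gamma> - 1) - \<sigma>2 > n"
  shows "asym_equiv v (\<lambda>x. norm x powr (- ((n - \<beta> * \<gamma>) / (\<gamma> - 1))))"
proof -
  define \<theta> where "\<theta> = (n - \<beta> * \<gamma>) / (\<gamma> - 1)"
  have \<theta>: "\<theta> > 0" and n: "n > 0"
    using \<open>\<gamma> > 1\<close> \<open>\<beta> * \<gamma> < n\<close> n3 by (simp_all add: \<theta>_def n_def)
  from decaying obtain \<theta>2 where \<theta>2: "\<theta>2 > 0" and v: "asym_equiv v (\<lambda>x. norm x powr (- \<theta>2))"
    by blast
  obtain M where "\<And>x. u x \<le> M"
    using bounded by blast
  moreover have "\<sigma>2 > - n"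
    using \<open>\<sigma>2 > - (\<beta> * \<gamma>)\<close> \<open>\<beta> * \<gamma> < n\<close> by linarith
  ultimately obtain K where "K > 0" "AE x in lborel. K * (norm x + 1) powr (- \<theta>) \<le> v x"
    using positive_solution_second_ge_norm_powr[OF sol \<open>double_bounded c2\<close> _ \<open>p > 0\<close> \<open>\<gamma> > 1\<close>]
      \<open>\<beta> * \<gamma> < n\<close>
    unfolding \<theta>_def n_def by blast
  then have "\<theta>2 \<le> \<theta>"
    using asym_equiv_norm_powr_exponent_le[OF v] by blast
  moreover have "\<theta> \<le> \<theta>2"
  proof -
    have "n * (\<gamma> - 1) / (p * (n - \<beta> * \<gamma>) / (\<gamma> - 1) - (\<beta> * \<gamma> + \<sigma>2))
            \<le> n * (\<gamma> - 1) / (n - \<beta> * \<gamma>)"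
      using \<open>p * (n - \<beta> * \<gamma>) / (\<gamma> - 1) - \<sigma>2 > n\<close> \<open>\<gamma> > 1\<close> \<open>\<beta> * \<gamma> < n\<close> n
      by (intro divide_left_mono mult_pos_pos) auto
    moreover have "n * (\<gamma> - 1) / (n - \<beta> * \<gamma>) = n / \<theta>"
      by (simp add: \<theta>_def)
    ultimately have "n \<le> \<theta>2 * (n / \<theta>)"
      using \<theta> n opt_int(2) unfolding n_def
      by (intro asym_equiv_norm_powr_exponent_ge[OF v \<theta>2]) auto
    then show ?thesis
      using \<theta> n by (simp add: field_simps)
  qed
  ultimately show ?thesis
    using v by (simp add: \<theta>_def)
qed

end
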